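(* Let $\mathbb{F}\in\{\mathbb{R},\mathbb{C}\}$, $A\in\mathbb{F}^{m\times n}$, $b\in\mathbb{F}^m$, $f:\mathbb{F}^n\to[0,\infty]$ and $K\ge1$. Let $x',x''$ be distinct stationary points of $\mathcal{K}_{reg}(x)=\mathcal{Q}_2(f)(x)+\|Ax-b\|_2^2$ such that $x''-x'\in P_K$, and set $z'=(I-A^*A)x'+A^*b$, $z''=(I-A^*A)x''+A^*b$. Then $$\mathrm{Re}\langle z''-z',x''-x'\rangle\le(1-\beta_K^2)\|x''-x'\|_2^2.$$
   Context: $\mathcal{Q}_2(f)$ is the quadratic envelope of $f$: $\mathcal{Q}_2(f)(x)=\breve h(x)-\|x\|^2$, where $\breve h$ is the lower semicontinuous convex envelope of $h(x)=f(x)+\|x\|^2$. $\mathrm{card}(x)$ is the number of nonzero entries, $P_K=\{x:\mathrm{card}(x)\le K\}$, $\beta_K=\inf\{\|Ax\|_2/\|x\|_2:x\ne0,\ x\in P_K\}$. $A^*$ is the conjugate transpose, $\langle x,y\rangle=\sum_i x_i\overline{y_i}$. A stationary point of a function $g$ is a point $x$ with $0$ in the Fréchet subdifferential $\hat\partial g(x)$, i.e. the set of $v$ with $\liminf_{y\to x,y\ne x}(g(y)-g(x)-\mathrm{Re}\langle v,y-x\rangle)/\|y-x\|\ge0$. *)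

theory Defs
  imports "HOL-Analysis.Analysis"
begin

text \<open>The real part of the
  inner product Re<x,y> = Re (sum x_i * cnj y_i) coincides with the real inner product
  x \<bullet> y of HOL-Analysis on 'a^'n.\<close>

definition vcard :: "('a::zero)^'n \<Rightarrow> nat" where
  "vcard x = card {i. x $ i \<noteq> 0}"

definition PK :: "nat \<Rightarrow> (('a::zero)^'n) set" where
  "PK K = {x. vcard x \<le> K}"

definition betaK :: "nat \<Rightarrow> ('a::real_normed_field)^'n^'m \<Rightarrow> real" where
  "betaK K A = Inf {norm (A *v x) / norm x | x. x \<noteq> 0 \<and> x \<in> PK K}"

definition cadj :: "complex^'n^'m \<Rightarrow> complex^'m^'n" where
  "cadj A = (\<chi> i j. cnj (A $ j $ i))"

definition lsc_convex_env :: "('v::real_normed_vector \<Rightarrow> ereal) \<Rightarrow> 'v \<Rightarrow> ereal" where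
  "lsc_convex_env h x = Sup {g x | g.
      convex {(y, t::real). g y \<le> ereal t} \<and> closed {(y, t::real). g y \<le> ereal t}
      \<and> (\<forall>y. g y \<le> h y)}"

definition Q2 :: "('v::real_normed_vector \<Rightarrow> ereal) \<Rightarrow> 'v \<Rightarrow> ereal" where
  "Q2 f x = lsc_convex_env (\<lambda>y. f y + ereal ((norm y)\<^sup>2)) x - ereal ((norm x)\<^sup>2)"

definition frechet_subdiff :: "('v::real_inner \<Rightarrow> ereal) \<Rightarrow> 'v \<Rightarrow> 'v set" where
  "frechet_subdiff g x = {v. \<bar>g x\<bar> \<noteq> \<infinity> \<and>
      Liminf (at x) (\<lambda>y. (g y - g x - ereal (v \<bullet> (y - x))) / ereal (norm (y - x))) \<ge> 0}"

definition stationary :: "('v::real_inner \<Rightarrow> ereal) \<Rightarrow> 'v \<Rightarrow> bool" where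
  "stationary g x \<longleftrightarrow> 0 \<in> frechet_subdiff g x"

definition Kreg :: "(('a::real_normed_field)^'n \<Rightarrow> ereal) \<Rightarrow> 'a^'n^'m \<Rightarrow> 'a^'m \<Rightarrow> 'a^'n \<Rightarrow> ereal" where
  "Kreg f A b x = Q2 f x + ereal ((norm (A *v x - b))\<^sup>2)"

end

theory Submission
  imports Defs
begin

text \<open>The nonzero sparse witness d is needed: without one, betaK K A is the unspecified
  real Inf {}.\<close>

lemma betaK_nonneg:
  fixes A :: "('a::real_normed_field)^'n^'m" and d :: "'a^'n"
  assumes "d \<noteq> 0" "d \<in> PK K"
  shows "0 \<le> betaK K A"
proof -
  have "norm (A *v d) / norm d \<in> {norm (A *v x) / norm x | x. x \<noteq> 0 \<and> x \<in> PK K}"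
    using assms by blast
  then show ?thesis
    unfolding betaK_def by (intro cInf_greatest) auto
qed

lemma betaK_mult_norm_le:
  fixes A :: "('a::real_normed_field)^'n^'m"
  assumes "d \<in> PK K"
  shows "betaK K A * norm d \<le> norm (A *v d)"
proof (cases "d = 0")
  case False
  let ?S = "{norm (A *v x) / norm x | x. x \<noteq> 0 \<and> x \<in> PK K}"
  have "norm (A *v d) / norm d \<in> ?S" using False assms by blast
  moreover have "bdd_below ?S" by (rule bdd_belowI[of _ 0]) auto
  ultimately have "betaK K A \<le> norm (A *v d) / norm d"
    unfolding betaK_def by (rule cInf_lower)
  with False show ?thesis by (simp add: pos_le_divide_eq)
qed simp

lemma betaK_sq_mult_norm_sq_le:
  fixes A :: "('a::real_normed_field)^'n^'m"
  assumes "d \<in> PK K"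
  shows "(betaK K A)\<^sup>2 * (norm d)\<^sup>2 \<le> (norm (A *v d))\<^sup>2"
proof (cases "d = 0")
  case False
  then have "0 \<le> betaK K A * norm d"
    using betaK_nonneg[OF False assms, of A] by simp
  from power_mono[OF betaK_mult_norm_le[OF assms] this] show ?thesis
    by (simp add: power_mult_distrib)
qed simp

lemma inner_transpose_mult_vec: "(transpose A *v y) \<bullet> x = y \<bullet> (A *v (x::real^'n))"
  by (simp add: dot_lmul_matrix)

lemma inner_cadj_mult_vec: "(cadj A *v y) \<bullet> x = y \<bullet> (A *v (x::complex^'n))"
proof -
  have inner_complex: "\<And>a b::complex. a \<bullet> b = Re (a * cnj b)"
    by (simp add: inner_complex_def)
  have "(cadj A *v y) \<bullet> x = (\<Sum>i\<in>UNIV. \<Sum>j\<in>UNIV. Re (cnj (A $ j $ i) * y $ j * cnj (x $ i)))"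
    by (simp add: inner_vec_def matrix_vector_mult_def cadj_def inner_complex
        sum_distrib_right Re_sum)
  also have "\<dots> = (\<Sum>j\<in>UNIV. \<Sum>i\<in>UNIV. Re (cnj (A $ j $ i) * y $ j * cnj (x $ i)))"
    by (rule sum.swap)
  also have "\<dots> = y \<bullet> (A *v x)"
    by (simp add: inner_vec_def matrix_vector_mult_def inner_complex
        sum_distrib_left Re_sum mult_ac)
  finally show ?thesis .
qed

lemma landweber_step_inner_le:
  fixes A :: "('a::{real_inner, real_normed_field})^'n^'m" and B :: "'a^'m^'n"
  assumes adjoint: "\<And>x y. (B *v y) \<bullet> x = y \<bullet> (A *v x)"
    and sparse: "x'' - x' \<in> PK K"
  shows "((x'' - B *v (A *v x'') + B *v b) - (x' - B *v (A *v x') + B *v b)) \<bullet> (x'' - x')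
    \<le> (1 - (betaK K A)\<^sup>2) * (norm (x'' - x'))\<^sup>2"
proof -
  define d where "d = x'' - x'"
  have step_diff: "(x'' - B *v (A *v x'') + B *v b) - (x' - B *v (A *v x') + B *v b)
      = d - B *v (A *v d)"
    by (simp add: d_def matrix_vector_mult_diff_distrib algebra_simps)
  have "(d - B *v (A *v d)) \<bullet> d = (norm d)\<^sup>2 - (norm (A *v d))\<^sup>2"
    by (simp add: inner_diff_left adjoint power2_norm_eq_inner)
  moreover have "(betaK K A)\<^sup>2 * (norm d)\<^sup>2 \<le> (norm (A *v d))\<^sup>2"
    using sparse by (simp add: d_def betaK_sq_mult_norm_sq_le)
  ultimately show ?thesis
    unfolding step_diff d_def[symmetric] by (simp add: algebra_simps)
qed

theorem proposition3p1:
  shows "(\<forall>(A::real^'n^'m) (b::real^'m) (f::real^'n \<Rightarrow> ereal) (K::nat) x' x''.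
            K \<ge> 1 \<and> (\<forall>x. f x \<ge> 0) \<and>
            stationary (Kreg f A b) x' \<and> stationary (Kreg f A b) x'' \<and> x' \<noteq> x'' \<and>
            x'' - x' \<in> PK K \<longrightarrow>
            (let z' = x' - transpose A *v (A *v x') + transpose A *v b;
                 z'' = x'' - transpose A *v (A *v x'') + transpose A *v b
             in (z'' - z') \<bullet> (x'' - x') \<le> (1 - (betaK K A)\<^sup>2) * (norm (x'' - x'))\<^sup>2))
       \<and> (\<forall>(A::complex^'n^'m) (b::complex^'m) (f::complex^'n \<Rightarrow> ereal) (K::nat) x' x''.
            K \<ge> 1 \<and> (\<forall>x. f x \<ge> 0) \<and>
            stationary (Kreg f A b) x' \<and> stationary (Kreg f A b) x'' \<and> x' \<noteq> x'' \<and>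
            x'' - x' \<in> PK K \<longrightarrow>
            (let z' = x' - cadj A *v (A *v x') + cadj A *v b;
                 z'' = x'' - cadj A *v (A *v x'') + cadj A *v b
             in (z'' - z') \<bullet> (x'' - x') \<le> (1 - (betaK K A)\<^sup>2) * (norm (x'' - x'))\<^sup>2))"
  unfolding Let_def
  using landweber_step_inner_le[OF inner_transpose_mult_vec]
    landweber_step_inner_le[OF inner_cadj_mult_vec]
  by blast

end
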